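(* Under the setting of the context, let $f:E\times\mathbb R^d\to\mathbb R$ be bounded and Lipschitz continuous with respect to the second variable, uniformly in the first. Then for all $T\ge0$, $$\sup_{0\le t\le T}\ m^{-2}\Bigl|\sum_{k=0}^{\lfloor m^2t\rfloor-1}f(\xi_k,S_k/m)-\sum_{k=0}^{\lfloor m^2t\rfloor-1}\bar f(S_k/m)\Bigr|\longrightarrow0$$ in probability as $m\to+\infty$, where $\bar f(y)=\sum_{i\in E}f(i,y)\mu(i)$.
   Context: Let $d\ge1$, $(e_1,\dots,e_d)$ the canonical basis, $\mathcal V=\{\pm e_1,\dots,\pm e_d\}$. Let $E$ be a finite set and $P$ an irreducible and aperiodic stochastic matrix on $E$ with unique invariant probability $\mu$. For $k\in E$, $y\in\mathbb R^d$, $p(k,y,\cdot)$ is a probability on $\mathcal V$, with $y\mapsto p(k,y,u)$ twice continuously differentiable with bounded derivatives; $g(k,y)=\sum_uu\,p(k,y,u)$ satisfies $\sum_k\mu(k)g(k,y)=0$ for all $y$. For an integer $m\ge1$, $(\xi_n,S_n)_{n\ge0}$ is a Markov chain on $E\times\mathbb Z^d$ (depending on $m$) with $S_0=0$ and $\mathbb P(\xi_{n+1}=k,S_{n+1}=S_n+u\mid\xi_0,\dots,\xi_n,S_0,\dots,S_n)=P(\xi_n,k)p(\xi_n,S_n/m,u)$ for $k\in E$, $u\in\mathcal V$. *)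

theory Defs
  imports "HOL-Probability.Probability"
begin

fun mpow :: "('e::finite \<Rightarrow> 'e \<Rightarrow> real) \<Rightarrow> nat \<Rightarrow> 'e \<Rightarrow> 'e \<Rightarrow> real" where
  "mpow P 0 i j = (if i = j then 1 else 0)"
| "mpow P (Suc n) i j = (\<Sum>k\<in>UNIV. mpow P n i k * P k j)"

definition stochastic :: "('e::finite \<Rightarrow> 'e \<Rightarrow> real) \<Rightarrow> bool" where
  "stochastic P \<longleftrightarrow> (\<forall>i j. P i j \<ge> 0) \<and> (\<forall>i. (\<Sum>j\<in>UNIV. P i j) = 1)"

definition irreducible_mc :: "('e::finite \<Rightarrow> 'e \<Rightarrow> real) \<Rightarrow> bool" where
  "irreducible_mc P \<longleftrightarrow> (\<forall>i j. \<exists>n. mpow P n i j > 0)"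

definition aperiodic_mc :: "('e::finite \<Rightarrow> 'e \<Rightarrow> real) \<Rightarrow> bool" where
  "aperiodic_mc P \<longleftrightarrow> (\<forall>i. Gcd {n::nat. n > 0 \<and> mpow P n i i > 0} = 1)"

definition invariant_prob :: "('e::finite \<Rightarrow> 'e \<Rightarrow> real) \<Rightarrow> ('e \<Rightarrow> real) \<Rightarrow> bool" where
  "invariant_prob P \<mu> \<longleftrightarrow> (\<forall>i. \<mu> i \<ge> 0) \<and> (\<Sum>i\<in>UNIV. \<mu> i) = 1 \<and>
     (\<forall>j. (\<Sum>i\<in>UNIV. \<mu> i * P i j) = \<mu> j)"

definition unit_steps :: "(int ^ 'd) set" where
  "unit_steps = {axis i 1 | i. True} \<union> {axis i (-1) | i. True}"

definition rescale :: "nat \<Rightarrow> int ^ 'd \<Rightarrow> real ^ 'd" where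
  "rescale m s = (\<chi> i. real_of_int (s $ i) / real m)"

definition fbar :: "('e::finite \<Rightarrow> real ^ 'd \<Rightarrow> real) \<Rightarrow> ('e \<Rightarrow> real) \<Rightarrow> real ^ 'd \<Rightarrow> real" where
  "fbar f \<mu> y = (\<Sum>i\<in>UNIV. f i y * \<mu> i)"

definition drift :: "('e \<Rightarrow> real ^ 'd \<Rightarrow> int ^ 'd \<Rightarrow> real) \<Rightarrow> 'e \<Rightarrow> real ^ 'd \<Rightarrow> real ^ 'd" where
  "drift p k y = (\<Sum>u\<in>unit_steps. p k y u *\<^sub>R (\<chi> i. real_of_int (u $ i)))"

end

(*
  Put h = f - fbar, which has mean zero under mu in its first variable. Since mu is the unique
  invariant law, I - P maps onto the mu-centred functions on E, so h = phi - P phi with phi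
  bounded by some K and Lipschitz in y. Along the chain, the sum of h(xi_k, S_k/m) over k < n is
  then a martingale M_n with increments bounded by 2K, plus a boundary term bounded by 2K, plus an
  error of order n/m, because one step moves S/m by 1/m. Chebyshev's inequality with
  E M_n^2 <= 4 K^2 n at the m T + 1 multiples of m below m^2 T, together with the oscillation
  bound 2 K m of M between them, shows that the probability in question is O(1/m).
*)
theory Submission
  imports Defs
begin

section \<open>The Poisson equation for a chain with a unique invariant law\<close>

lemma nonneg_left_fixed_eq_multiple:
  fixes P :: "'e::finite \<Rightarrow> 'e \<Rightarrow> real" and q :: "'e \<Rightarrow> real"
  assumes uniq: "\<And>\<nu>. invariant_prob P \<nu> \<Longrightarrow> \<nu> = \<mu>"
    and q_nonneg: "\<And>i. q i \<ge> 0" and q_fixed: "\<And>j. (\<Sum>i\<in>UNIV. q i * P i j) = q j"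
  shows "\<exists>c. \<forall>i. q i = c * \<mu> i"
proof (cases "(\<Sum>i\<in>UNIV. q i) = 0")
  case True
  then have "\<forall>i\<in>UNIV. q i = 0"
    using q_nonneg by (subst sum_nonneg_eq_0_iff[symmetric]) auto
  then show ?thesis by (intro exI[of _ 0]) auto
next
  case False
  define s where "s = (\<Sum>i\<in>UNIV. q i)"
  have s: "s > 0"
    using False q_nonneg unfolding s_def by (metis less_eq_real_def sum_nonneg)
  have "invariant_prob P (\<lambda>i. q i / s)"
    unfolding invariant_prob_def
  proof (intro conjI allI)
    show "0 \<le> q i / s" for i using q_nonneg s by simp
    show "(\<Sum>i\<in>UNIV. q i / s) = 1"
      using s by (simp add: s_def[symmetric] sum_divide_distrib[symmetric])
    show "(\<Sum>i\<in>UNIV. q i / s * P i j) = q j / s" for j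
      using q_fixed[of j] by (simp add: sum_divide_distrib[symmetric])
  qed
  then have "(\<lambda>i. q i / s) = \<mu>" by (rule uniq)
  then show ?thesis using s by (intro exI[of _ s]) (auto simp: fun_eq_iff field_simps)
qed

text \<open>A left fixed vector is subinvariant in absolute value, and \<open>P\<close> preserves total mass, so
  there is no room for a strict inequality.\<close>
lemma abs_left_fixed:
  fixes P :: "'e::finite \<Rightarrow> 'e \<Rightarrow> real" and x :: "'e \<Rightarrow> real"
  assumes st: "stochastic P" and x_fixed: "\<And>j. (\<Sum>i\<in>UNIV. x i * P i j) = x j"
  shows "(\<Sum>i\<in>UNIV. \<bar>x i\<bar> * P i j) = \<bar>x j\<bar>"
proof -
  have P_nonneg: "\<And>i j. P i j \<ge> 0" and P_sum: "\<And>i. (\<Sum>j\<in>UNIV. P i j) = 1"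
    using st by (auto simp: stochastic_def)
  have sub: "\<bar>x j\<bar> \<le> (\<Sum>i\<in>UNIV. \<bar>x i\<bar> * P i j)" for j
  proof -
    have "\<bar>x j\<bar> = \<bar>\<Sum>i\<in>UNIV. x i * P i j\<bar>" using x_fixed[of j] by simp
    also have "\<dots> \<le> (\<Sum>i\<in>UNIV. \<bar>x i * P i j\<bar>)" by (rule sum_abs)
    also have "\<dots> = (\<Sum>i\<in>UNIV. \<bar>x i\<bar> * P i j)" using P_nonneg by (simp add: abs_mult)
    finally show ?thesis .
  qed
  have "(\<Sum>j\<in>UNIV. \<Sum>i\<in>UNIV. \<bar>x i\<bar> * P i j) = (\<Sum>i\<in>UNIV. \<bar>x i\<bar> * (\<Sum>j\<in>UNIV. P i j))"
    by (subst sum.swap) (simp add: sum_distrib_left)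
  also have "\<dots> = (\<Sum>j\<in>UNIV. \<bar>x j\<bar>)" using P_sum by simp
  finally have "(\<Sum>j\<in>UNIV. (\<Sum>i\<in>UNIV. \<bar>x i\<bar> * P i j) - \<bar>x j\<bar>) = 0"
    by (simp add: sum_subtractf)
  then have "\<forall>j\<in>UNIV. (\<Sum>i\<in>UNIV. \<bar>x i\<bar> * P i j) - \<bar>x j\<bar> = 0"
    using sub by (subst sum_nonneg_eq_0_iff[symmetric]) auto
  then show ?thesis by simp
qed

lemma left_fixed_eq_multiple:
  fixes P :: "'e::finite \<Rightarrow> 'e \<Rightarrow> real" and x :: "'e \<Rightarrow> real"
  assumes st: "stochastic P" and uniq: "\<And>\<nu>. invariant_prob P \<nu> \<Longrightarrow> \<nu> = \<mu>"
    and x_fixed: "\<And>j. (\<Sum>i\<in>UNIV. x i * P i j) = x j"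
  shows "\<exists>c. \<forall>i. x i = c * \<mu> i"
proof -
  note abs_fixed = abs_left_fixed[OF st x_fixed]
  obtain c1 where c1: "\<forall>i. (\<bar>x i\<bar> + x i) / 2 = c1 * \<mu> i"
  proof (atomize_elim, rule nonneg_left_fixed_eq_multiple[OF uniq])
    show "0 \<le> (\<bar>x i\<bar> + x i) / 2" for i by simp
    show "(\<Sum>i\<in>UNIV. (\<bar>x i\<bar> + x i) / 2 * P i j) = (\<bar>x j\<bar> + x j) / 2" for j
      using abs_fixed[of j] x_fixed[of j]
      by (simp add: sum_divide_distrib[symmetric] sum.distrib distrib_right)
  qed
  obtain c2 where c2: "\<forall>i. (\<bar>x i\<bar> - x i) / 2 = c2 * \<mu> i"
  proof (atomize_elim, rule nonneg_left_fixed_eq_multiple[OF uniq])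
    show "0 \<le> (\<bar>x i\<bar> - x i) / 2" for i by simp
    show "(\<Sum>i\<in>UNIV. (\<bar>x i\<bar> - x i) / 2 * P i j) = (\<bar>x j\<bar> - x j) / 2" for j
      using abs_fixed[of j] x_fixed[of j]
      by (simp add: sum_divide_distrib[symmetric] sum_subtractf left_diff_distrib)
  qed
  have "x i = (c1 - c2) * \<mu> i" for i
    using c1[rule_format, of i] c2[rule_format, of i] by (simp add: field_simps)
  then show ?thesis by blast
qed

definition poisson_op :: "('e::finite \<Rightarrow> 'e \<Rightarrow> real) \<Rightarrow> real^'e \<Rightarrow> real^'e" where
  "poisson_op P x = (\<chi> i. x$i - (\<Sum>j\<in>UNIV. P i j * x$j))"

lemma linear_poisson_op: "linear (poisson_op P)"
  by (rule linearI)
    (simp_all add: poisson_op_def vec_eq_iff sum.distrib algebra_simps sum_distrib_left)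

lemma inner_invariant_poisson_op:
  assumes mu: "invariant_prob P \<mu>"
  shows "(\<chi> i. \<mu> i) \<bullet> poisson_op P x = 0"
proof -
  have "(\<chi> i. \<mu> i) \<bullet> poisson_op P x
      = (\<Sum>i\<in>UNIV. \<mu> i * x$i) - (\<Sum>i\<in>UNIV. \<Sum>j\<in>UNIV. \<mu> i * P i j * x$j)"
    by (simp add: poisson_op_def inner_vec_def right_diff_distrib sum_subtractf
        sum_distrib_left mult.assoc)
  also have "(\<Sum>i\<in>UNIV. \<Sum>j\<in>UNIV. \<mu> i * P i j * x$j) = (\<Sum>j\<in>UNIV. (\<Sum>i\<in>UNIV. \<mu> i * P i j) * x$j)"
    by (subst sum.swap) (simp add: sum_distrib_right)
  also have "\<dots> = (\<Sum>j\<in>UNIV. \<mu> j * x$j)"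
    using mu by (simp add: invariant_prob_def)
  finally show ?thesis by simp
qed

lemma orthogonal_range_poisson_op:
  assumes st: "stochastic P" and uniq: "\<And>\<nu>. invariant_prob P \<nu> \<Longrightarrow> \<nu> = \<mu>"
    and orth: "\<And>w. x \<bullet> poisson_op P w = 0"
  shows "\<exists>c. x = c *\<^sub>R (\<chi> i. \<mu> i)"
proof -
  have "(\<Sum>i\<in>UNIV. x$i * P i j) = x$j" for j
  proof -
    have "x \<bullet> poisson_op P (axis j 1) = x$j - (\<Sum>i\<in>UNIV. x$i * P i j)"
      by (simp add: poisson_op_def inner_vec_def axis_def right_diff_distrib sum_subtractf
          mult.commute[of "P _ _"] if_distrib[where f="\<lambda>t. t * _"] if_distrib[where f="\<lambda>t. _ * t"]
          cong: if_cong)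
    then show ?thesis using orth[of "axis j 1"] by simp
  qed
  then obtain c where "\<forall>i. x$i = c * \<mu> i"
    using left_fixed_eq_multiple[OF st uniq, of "\<lambda>i. x$i"] by blast
  then show ?thesis by (auto simp: vec_eq_iff)
qed

lemma range_poisson_op:
  assumes st: "stochastic P" and mu: "invariant_prob P \<mu>"
    and uniq: "\<And>\<nu>. invariant_prob P \<nu> \<Longrightarrow> \<nu> = \<mu>"
  shows "range (poisson_op P) = {v. (\<chi> i. \<mu> i) \<bullet> v = 0}"
proof
  show "range (poisson_op P) \<subseteq> {v. (\<chi> i. \<mu> i) \<bullet> v = 0}"
    using inner_invariant_poisson_op[OF mu] by blast
next
  let ?mv = "(\<chi> i. \<mu> i) :: real^'a"
  have range_span: "span (range (poisson_op P)) = range (poisson_op P)"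
    by (simp add: linear_poisson_op linear_subspace_image span_eq_iff)
  have "?mv \<noteq> 0"
  proof
    assume "?mv = 0"
    then have "\<forall>i. \<mu> i = 0" by (simp add: vec_eq_iff)
    then show False using mu by (simp add: invariant_prob_def)
  qed
  then have mv_pos: "?mv \<bullet> ?mv > 0" by simp
  show "{v. ?mv \<bullet> v = 0} \<subseteq> range (poisson_op P)"
  proof safe
    fix v assume v_orth: "?mv \<bullet> v = 0"
    obtain y z where y: "y \<in> range (poisson_op P)" and v: "v = y + z"
      and z: "\<And>w. w \<in> range (poisson_op P) \<Longrightarrow> orthogonal z w"
      using orthogonal_subspace_decomp_exists[of "range (poisson_op P)" v] range_span by metis
    obtain c where zc: "z = c *\<^sub>R ?mv"
      using orthogonal_range_poisson_op[OF st uniq, of z] z by (auto simp: orthogonal_def)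
    have "0 = c * (?mv \<bullet> ?mv)"
      using v_orth y inner_invariant_poisson_op[OF mu] by (auto simp: v zc inner_add_right)
    then have "c = 0" using mv_pos by simp
    then show "v \<in> range (poisson_op P)" using v zc y by simp
  qed
qed

text \<open>The solution is taken through a linear right inverse of \<open>I - P\<close>, which transfers
  boundedness and the Lipschitz property from \<open>h\<close> to \<open>\<phi>\<close>.\<close>
lemma poisson_equation:
  fixes P :: "'e::finite \<Rightarrow> 'e \<Rightarrow> real" and h :: "'e \<Rightarrow> 'y::real_normed_vector \<Rightarrow> real"
  assumes st: "stochastic P" and mu: "invariant_prob P \<mu>"
    and uniq: "\<And>\<nu>. invariant_prob P \<nu> \<Longrightarrow> \<nu> = \<mu>"
    and h_bounded: "\<And>i y. \<bar>h i y\<bar> \<le> B"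
    and h_lipschitz: "\<And>i y z. \<bar>h i y - h i z\<bar> \<le> L * norm (y - z)" and L: "L \<ge> 0"
    and h_centered: "\<And>y. (\<Sum>i\<in>UNIV. \<mu> i * h i y) = 0"
  obtains \<phi> K Lp where "\<And>i y. \<phi> i y - (\<Sum>j\<in>UNIV. P i j * \<phi> j y) = h i y"
    and "\<And>i y. \<bar>\<phi> i y\<bar> \<le> K" and "\<And>i y z. \<bar>\<phi> i y - \<phi> i z\<bar> \<le> Lp * norm (y - z)"
    and "Lp \<ge> 0"
proof -
  obtain g where g_lin: "linear g" and g_inv: "\<forall>v\<in>range (poisson_op P). poisson_op P (g v) = v"
    using linear_exists_right_inverse_on[OF linear_poisson_op subspace_UNIV] by auto
  obtain Bg where Bg: "Bg > 0" "\<And>x. norm (g x) \<le> Bg * norm x"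
    using linear_bounded_pos[OF g_lin] by blast
  define hv where "hv y = (\<chi> i. h i y)" for y
  define \<phi> where "\<phi> i y = g (hv y) $ i" for i y
  have "hv y \<in> range (poisson_op P)" for y
    using h_centered by (simp add: range_poisson_op[OF st mu uniq] hv_def inner_vec_def)
  then have "poisson_op P (g (hv y)) = hv y" for y using g_inv by blast
  then have "\<phi> i y - (\<Sum>j\<in>UNIV. P i j * \<phi> j y) = h i y" for i y
    by (simp add: poisson_op_def \<phi>_def hv_def vec_eq_iff)
  moreover have "\<bar>\<phi> i y\<bar> \<le> Bg * (real CARD('e) * B)" for i y
  proof -
    have "\<bar>\<phi> i y\<bar> \<le> norm (g (hv y))" unfolding \<phi>_def by (rule component_le_norm_cart)
    also have "\<dots> \<le> Bg * norm (hv y)" by (rule Bg)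
    also have "norm (hv y) \<le> (\<Sum>i\<in>UNIV. \<bar>hv y $ i\<bar>)" by (rule norm_le_l1_cart)
    also have "\<dots> \<le> (\<Sum>i\<in>(UNIV::'e set). B)" by (rule sum_mono) (simp add: hv_def h_bounded)
    finally show ?thesis using Bg by (simp add: mult_left_mono)
  qed
  moreover have "\<bar>\<phi> i y - \<phi> i z\<bar> \<le> (Bg * (real CARD('e) * L)) * norm (y - z)" for i y z
  proof -
    have "\<bar>\<phi> i y - \<phi> i z\<bar> = \<bar>g (hv y - hv z) $ i\<bar>"
      unfolding \<phi>_def by (simp add: linear_diff[OF g_lin])
    also have "\<dots> \<le> norm (g (hv y - hv z))" by (rule component_le_norm_cart)
    also have "\<dots> \<le> Bg * norm (hv y - hv z)" by (rule Bg)
    also have "norm (hv y - hv z) \<le> (\<Sum>i\<in>UNIV. \<bar>(hv y - hv z) $ i\<bar>)" by (rule norm_le_l1_cart)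
    also have "\<dots> \<le> (\<Sum>i\<in>(UNIV::'e set). L * norm (y - z))"
      by (rule sum_mono) (simp add: hv_def h_lipschitz)
    finally show ?thesis using Bg by (simp add: mult_left_mono mult.assoc)
  qed
  moreover have "Bg * (real CARD('e) * L) \<ge> 0" using Bg L by simp
  ultimately show thesis by (rule that)
qed

section \<open>Martingale estimates for a walk on \<open>E \<times> \<int>^d\<close>\<close>

lemma less_SUP_floor_imp:
  fixes g :: "nat \<Rightarrow> real"
  assumes c: "c \<ge> 0" and T: "T \<ge> 0" and less: "\<epsilon> < (SUP t\<in>{0..T}. g (nat \<lfloor>c * t\<rfloor>))"
  shows "\<exists>n\<le>nat \<lfloor>c * T\<rfloor>. \<epsilon> < g n"
proof -
  have grid: "nat \<lfloor>c * t\<rfloor> \<le> nat \<lfloor>c * T\<rfloor>" if "t \<in> {0..T}" for t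
    using that c by (intro nat_mono floor_mono mult_left_mono) auto
  then have "(\<lambda>t. g (nat \<lfloor>c * t\<rfloor>)) ` {0..T} \<subseteq> g ` {..nat \<lfloor>c * T\<rfloor>}" by auto
  then have "bdd_above ((\<lambda>t. g (nat \<lfloor>c * t\<rfloor>)) ` {0..T})"
    by (meson bdd_above_mono finite_atMost finite_imageI bdd_above_finite)
  then have "\<exists>t\<in>{0..T}. \<epsilon> < g (nat \<lfloor>c * t\<rfloor>)"
    using less T by (simp add: less_cSUP_iff)
  then show ?thesis using grid by blast
qed

text \<open>\<open>tr k s j u\<close> is the probability of jumping from \<open>(k, s)\<close> to \<open>(j, s + u)\<close>.\<close>
locale markov_walk = prob_space N for N :: "'a measure" +
  fixes X :: "nat \<Rightarrow> 'a \<Rightarrow> 'e::finite" and Z :: "nat \<Rightarrow> 'a \<Rightarrow> int^'d::finite"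
    and tr :: "'e \<Rightarrow> int^'d \<Rightarrow> 'e \<Rightarrow> int^'d \<Rightarrow> real" and U :: "(int^'d) set"
  assumes X_measurable[measurable]: "\<And>n. X n \<in> measurable N (count_space UNIV)"
    and Z_measurable[measurable]: "\<And>n. Z n \<in> measurable N (count_space UNIV)"
    and tr_nonneg: "\<And>k s j u. tr k s j u \<ge> 0"
    and tr_sum: "\<And>k s. (\<Sum>j\<in>UNIV. \<Sum>u\<in>U. tr k s j u) = 1"
    and finite_U: "finite U"
    and cylinder_prob: "\<And>n ks ss. ss 0 = 0 \<Longrightarrow>
       measure N {\<omega> \<in> space N. \<forall>i\<le>n. X i \<omega> = ks i \<and> Z i \<omega> = ss i}
       = measure N {\<omega> \<in> space N. X 0 \<omega> = ks 0} *
         (\<Prod>i<n. tr (ks i) (ss i) (ks (Suc i)) (ss (Suc i) - ss i))"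
begin

lemma borel_measurable_state_fun[measurable]:
  "(\<lambda>\<omega>. F (X k \<omega>) (Z k \<omega>) :: real) \<in> borel_measurable N"
proof -
  have "(\<lambda>\<omega>. (X k \<omega>, Z k \<omega>)) \<in> measurable N (count_space UNIV)"
  proof (rule measurable_count_space_eq2_countable[THEN iffD2], intro conjI ballI)
    fix ks assume "ks \<in> (UNIV :: ('e \<times> (int^'d)) set)"
    have "(\<lambda>\<omega>. (X k \<omega>, Z k \<omega>)) -` {ks} \<inter> space N
        = {\<omega> \<in> space N. X k \<omega> = fst ks \<and> Z k \<omega> = snd ks}" by auto
    also have "\<dots> \<in> sets N" by measurable
    finally show "(\<lambda>\<omega>. (X k \<omega>, Z k \<omega>)) -` {ks} \<inter> space N \<in> sets N" .
  qed simp_all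
  then show ?thesis
    using measurable_compose[of _ N "count_space UNIV" "\<lambda>(x, s). F x s" borel] by simp
qed

text \<open>The law of the walk is only known on cylinders, so moments are computed as finite sums over
  the paths that carry its mass.\<close>
definition traj :: "nat \<Rightarrow> 'a \<Rightarrow> ('e \<times> (int^'d)) list" where
  "traj n \<omega> = map (\<lambda>i. (X i \<omega>, Z i \<omega>)) [0..<Suc n]"

definition cylinder :: "('e \<times> (int^'d)) list \<Rightarrow> 'a set" where
  "cylinder xs = {\<omega> \<in> space N. traj (length xs - 1) \<omega> = xs}"

definition path_prob :: "('e \<times> (int^'d)) list \<Rightarrow> real" where
  "path_prob xs = measure N (cylinder xs)"

definition extend :: "('e \<times> (int^'d)) list \<Rightarrow> 'e \<Rightarrow> int^'d \<Rightarrow> ('e \<times> (int^'d)) list" where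
  "extend ys j u = ys @ [(j, snd (last ys) + u)]"

fun paths :: "nat \<Rightarrow> ('e \<times> (int^'d)) list set" where
  "paths 0 = (\<lambda>k. [(k, 0)]) ` UNIV"
| "paths (Suc n) = (\<lambda>(ys, j, u). extend ys j u) ` (paths n \<times> UNIV \<times> U)"

lemma length_paths: "xs \<in> paths n \<Longrightarrow> length xs = Suc n \<and> snd (xs ! 0) = 0"
  by (induction n arbitrary: xs) (auto simp: extend_def nth_append)

lemma finite_paths: "finite (paths n)"
  by (induction n) (auto intro!: finite_imageI simp: finite_U)

lemma inj_on_extend: "inj_on (\<lambda>(ys, j, u). extend ys j u) (paths n \<times> UNIV \<times> U)"
proof -
  have "ys = ys' \<and> j = j' \<and> u = u'"
    if "ys \<in> paths n" "ys' \<in> paths n" and e: "extend ys j u = extend ys' j' u'" for ys j u ys' j' u'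
  proof -
    have "length ys = length ys'" using that length_paths by metis
    with e show ?thesis by (auto simp: extend_def)
  qed
  then show ?thesis unfolding inj_on_def by auto
qed

lemma sum_paths_Suc:
  "(\<Sum>xs\<in>paths (Suc n). F xs) = (\<Sum>ys\<in>paths n. \<Sum>j\<in>UNIV. \<Sum>u\<in>U. F (extend ys j u))"
  by (simp add: sum.reindex[OF inj_on_extend] sum.cartesian_product prod.case_distrib)

lemma length_traj[simp]: "length (traj n \<omega>) = Suc n"
  by (simp add: traj_def)

lemma traj_not_Nil[simp]: "traj n \<omega> \<noteq> []"
  by (simp add: traj_def)

lemma nth_traj: "i \<le> n \<Longrightarrow> traj n \<omega> ! i = (X i \<omega>, Z i \<omega>)"
  by (simp add: traj_def nth_map_upt del: upt_Suc)

lemma cylinder_eq: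
  assumes "length xs = Suc n"
  shows "cylinder xs = {\<omega> \<in> space N. \<forall>i\<le>n. X i \<omega> = fst (xs ! i) \<and> Z i \<omega> = snd (xs ! i)}"
proof -
  have "traj n \<omega> = xs \<longleftrightarrow> (\<forall>i\<le>n. X i \<omega> = fst (xs ! i) \<and> Z i \<omega> = snd (xs ! i))" for \<omega>
    using assms by (auto simp: list_eq_iff_nth_eq nth_traj less_Suc_eq_le prod_eq_iff)
  then show ?thesis using assms by (simp add: cylinder_def)
qed

lemma sets_cylinder: "cylinder xs \<in> sets N"
proof (cases xs)
  case Nil
  then show ?thesis by (simp add: cylinder_def)
next
  case (Cons x xs')
  then show ?thesis by (simp add: cylinder_eq[of _ "length xs'"] del: length_Cons) measurable
qed

lemma path_prob_nonneg: "path_prob xs \<ge> 0"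
  by (simp add: path_prob_def)

lemma path_prob_eq:
  assumes "length xs = Suc n" "snd (xs ! 0) = 0"
  shows "path_prob xs = measure N {\<omega> \<in> space N. X 0 \<omega> = fst (xs ! 0)} *
    (\<Prod>i<n. tr (fst (xs ! i)) (snd (xs ! i)) (fst (xs ! Suc i)) (snd (xs ! Suc i) - snd (xs ! i)))"
  unfolding path_prob_def cylinder_eq[OF assms(1)]
  by (rule cylinder_prob[of "\<lambda>i. snd (xs ! i)" n "\<lambda>i. fst (xs ! i)"]) (use assms in simp)

lemma path_prob_extend:
  assumes ys: "ys \<in> paths n"
  shows "path_prob (extend ys j u) = path_prob ys * tr (fst (last ys)) (snd (last ys)) j u"
proof -
  have l: "length ys = Suc n" and z: "snd (ys ! 0) = 0" using length_paths[OF ys] by auto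
  have prefix: "extend ys j u ! i = ys ! i" if "i \<le> n" for i
    using that l by (simp add: extend_def nth_append)
  have last: "last ys = ys ! n" using l last_conv_nth[of ys] by fastforce
  have new: "extend ys j u ! Suc n = (j, snd (last ys) + u)"
    using l by (simp add: extend_def nth_append)
  have l': "length (extend ys j u) = Suc (Suc n)" and z': "snd (extend ys j u ! 0) = 0"
    using l prefix[of 0] z by (simp_all add: extend_def)
  show ?thesis
    unfolding path_prob_eq[OF l' z'] path_prob_eq[OF l z] prod.lessThan_Suc
    by (simp add: prefix new last)
qed

lemma sum_path_prob: "(\<Sum>xs\<in>paths n. path_prob xs) = 1"
proof (induction n)
  case 0
  have inj: "inj (\<lambda>k::'e. [(k, 0::int^'d)])" by (auto intro: injI)
  have "(\<Sum>xs\<in>paths 0. path_prob xs) = (\<Sum>k\<in>UNIV. measure N {\<omega> \<in> space N. X 0 \<omega> = k})"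
    by (simp add: sum.reindex[OF inj] path_prob_eq)
  also have "\<dots> = measure N (\<Union>k. {\<omega> \<in> space N. X 0 \<omega> = k})"
    by (rule finite_measure_finite_Union[symmetric]) (auto simp: disjoint_family_on_def)
  also have "(\<Union>k. {\<omega> \<in> space N. X 0 \<omega> = k}) = space N" by auto
  finally show ?case by (simp add: prob_space)
next
  case (Suc n)
  have "(\<Sum>xs\<in>paths (Suc n). path_prob xs)
      = (\<Sum>ys\<in>paths n. path_prob ys * (\<Sum>j\<in>UNIV. \<Sum>u\<in>U. tr (fst (last ys)) (snd (last ys)) j u))"
    unfolding sum_paths_Suc by (intro sum.cong refl) (simp add: path_prob_extend sum_distrib_left)
  then show ?case using Suc by (simp add: tr_sum)
qed

lemma prob_traj_le:
  "measure N {\<omega> \<in> space N. Q (traj n \<omega>)} \<le> (\<Sum>xs\<in>{xs \<in> paths n. Q xs}. path_prob xs)"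
proof -
  define C where "C = (\<Union>xs\<in>paths n. cylinder xs)"
  have disj: "disjoint_family_on cylinder A" if "A \<subseteq> paths n" for A
    unfolding disjoint_family_on_def
  proof (intro ballI impI)
    fix a b assume "a \<in> A" "b \<in> A" "a \<noteq> b"
    moreover have "length a = length b"
      using \<open>a \<in> A\<close> \<open>b \<in> A\<close> that length_paths by (metis subsetD)
    ultimately show "cylinder a \<inter> cylinder b = {}" by (auto simp: cylinder_def)
  qed
  have C_sets: "C \<in> sets N" unfolding C_def using finite_paths sets_cylinder by auto
  have "measure N C = 1"
    unfolding C_def using sum_path_prob[of n]
    by (subst finite_measure_finite_Union) (auto simp: finite_paths sets_cylinder disj path_prob_def)
  then have C_compl: "measure N (space N - C) = 0" using prob_compl[OF C_sets] by simp
  have "{\<omega> \<in> space N. Q (traj n \<omega>)} \<subseteq> (\<Union>xs\<in>{xs \<in> paths n. Q xs}. cylinder xs) \<union> (space N - C)"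
    using length_paths by (fastforce simp: C_def cylinder_def)
  then have "measure N {\<omega> \<in> space N. Q (traj n \<omega>)}
      \<le> measure N (\<Union>xs\<in>{xs \<in> paths n. Q xs}. cylinder xs) + measure N (space N - C)"
    by (intro order.trans[OF finite_measure_mono measure_Un_le])
      (use finite_paths sets_cylinder C_sets in auto)
  also have "measure N (\<Union>xs\<in>{xs \<in> paths n. Q xs}. cylinder xs) = (\<Sum>xs\<in>{xs \<in> paths n. Q xs}. path_prob xs)"
    unfolding path_prob_def
    by (rule finite_measure_finite_Union) (use finite_paths sets_cylinder disj in auto)
  finally show ?thesis using C_compl by simp
qed

definition trans_op :: "('e \<Rightarrow> int^'d \<Rightarrow> real) \<Rightarrow> 'e \<Rightarrow> int^'d \<Rightarrow> real" where
  "trans_op \<phi> k s = (\<Sum>j\<in>UNIV. \<Sum>u\<in>U. tr k s j u * \<phi> j (s + u))"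

definition mart_incr :: "('e \<Rightarrow> int^'d \<Rightarrow> real) \<Rightarrow> (nat \<Rightarrow> 'e) \<Rightarrow> (nat \<Rightarrow> int^'d) \<Rightarrow> nat \<Rightarrow> real" where
  "mart_incr \<phi> a b k = \<phi> (a (Suc k)) (b (Suc k)) - trans_op \<phi> (a k) (b k)"

definition mart :: "('e \<Rightarrow> int^'d \<Rightarrow> real) \<Rightarrow> (nat \<Rightarrow> 'e) \<Rightarrow> (nat \<Rightarrow> int^'d) \<Rightarrow> nat \<Rightarrow> real" where
  "mart \<phi> a b n = (\<Sum>k<n. mart_incr \<phi> a b k)"

definition states :: "('e \<times> (int^'d)) list \<Rightarrow> nat \<Rightarrow> 'e" where
  "states xs i = fst (xs ! i)"

definition positions :: "('e \<times> (int^'d)) list \<Rightarrow> nat \<Rightarrow> int^'d" where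
  "positions xs i = snd (xs ! i)"

lemma mart_cong:
  assumes "\<And>i. i \<le> n \<Longrightarrow> a i = a' i \<and> b i = b' i"
  shows "mart \<phi> a b n = mart \<phi> a' b' n"
  unfolding mart_def mart_incr_def using assms by (intro sum.cong refl) auto

lemma mart_traj: "mart \<phi> (\<lambda>i. X i \<omega>) (\<lambda>i. Z i \<omega>) n = mart \<phi> (states (traj n \<omega>)) (positions (traj n \<omega>)) n"
  by (rule mart_cong) (simp add: states_def positions_def nth_traj)

lemma abs_trans_op_le:
  assumes "\<And>j s. \<bar>\<phi> j s\<bar> \<le> K"
  shows "\<bar>trans_op \<phi> k s\<bar> \<le> K"
proof -
  have "\<bar>trans_op \<phi> k s\<bar> \<le> (\<Sum>j\<in>UNIV. \<Sum>u\<in>U. \<bar>tr k s j u * \<phi> j (s + u)\<bar>)"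
    unfolding trans_op_def by (rule order.trans[OF sum_abs sum_mono]) (rule sum_abs)
  also have "\<dots> \<le> (\<Sum>j\<in>UNIV. \<Sum>u\<in>U. tr k s j u * K)"
    by (intro sum_mono) (simp add: abs_mult tr_nonneg mult_left_mono assms)
  also have "\<dots> = K" by (simp add: sum_distrib_right[symmetric] tr_sum)
  finally show ?thesis .
qed

lemma abs_mart_incr_le:
  assumes "\<And>j s. \<bar>\<phi> j s\<bar> \<le> K"
  shows "\<bar>mart_incr \<phi> a b k\<bar> \<le> 2 * K"
  using abs_trans_op_le[of \<phi> K "a k" "b k", OF assms] assms[of "a (Suc k)" "b (Suc k)"]
  unfolding mart_incr_def by linarith

lemma abs_mart_diff_le:
  assumes "\<And>j s. \<bar>\<phi> j s\<bar> \<le> K"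
  shows "\<bar>mart \<phi> a b (i + d) - mart \<phi> a b i\<bar> \<le> d * (2 * K)"
proof (induction d)
  case (Suc d)
  have "mart \<phi> a b (i + Suc d) = mart \<phi> a b (i + d) + mart_incr \<phi> a b (i + d)"
    by (simp add: mart_def)
  then show ?case using Suc abs_mart_incr_le[of \<phi> K a b "i + d", OF assms]
    by (simp add: algebra_simps)
qed simp

lemma mart_extend:
  assumes ys: "ys \<in> paths n"
  shows "mart \<phi> (states (extend ys j u)) (positions (extend ys j u)) (Suc n)
    = mart \<phi> (states ys) (positions ys) n + (\<phi> j (snd (last ys) + u) - trans_op \<phi> (fst (last ys)) (snd (last ys)))"
proof -
  have l: "length ys = Suc n" using length_paths[OF ys] by auto
  have prefix: "extend ys j u ! i = ys ! i" if "i \<le> n" for i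
    using that l by (simp add: extend_def nth_append)
  have "last ys = ys ! n" using l last_conv_nth[of ys] by fastforce
  moreover have "extend ys j u ! Suc n = (j, snd (last ys) + u)"
    using l by (simp add: extend_def nth_append)
  moreover have "mart \<phi> (states (extend ys j u)) (positions (extend ys j u)) n = mart \<phi> (states ys) (positions ys) n"
    by (rule mart_cong) (simp add: states_def positions_def prefix)
  ultimately show ?thesis
    by (simp add: mart_def mart_incr_def states_def positions_def prefix)
qed

text \<open>The increment is centred under the one-step law, so the cross term vanishes.\<close>
lemma sum_extend_mart_square_le:
  assumes K: "\<And>j s. \<bar>\<phi> j s\<bar> \<le> K" and ys: "ys \<in> paths n"
  shows "(\<Sum>j\<in>UNIV. \<Sum>u\<in>U. (mart \<phi> (states (extend ys j u)) (positions (extend ys j u)) (Suc n))\<^sup>2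
        * path_prob (extend ys j u))
      \<le> path_prob ys * ((mart \<phi> (states ys) (positions ys) n)\<^sup>2 + 4 * K\<^sup>2)"
proof -
  define M where "M = mart \<phi> (states ys) (positions ys) n"
  define k where "k = fst (last ys)"
  define s where "s = snd (last ys)"
  define d where "d j u = \<phi> j (s + u) - trans_op \<phi> k s" for j u
  have centred: "(\<Sum>j\<in>UNIV. \<Sum>u\<in>U. tr k s j u * d j u) = 0"
    by (simp add: d_def right_diff_distrib sum_subtractf sum_distrib_right[symmetric] tr_sum trans_op_def)
  have d_bound: "\<bar>d j u\<bar> \<le> 2 * K" for j u
    using abs_trans_op_le[of \<phi> K k s, OF K] K[of j "s + u"] unfolding d_def by linarith
  have d_sq: "(d j u)\<^sup>2 \<le> 4 * K\<^sup>2" for j u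
    using power_mono[OF d_bound[of j u] abs_ge_zero, of 2] by (simp add: power_mult_distrib)
  have "(\<Sum>j\<in>UNIV. \<Sum>u\<in>U. (M + d j u)\<^sup>2 * (path_prob ys * tr k s j u))
      = path_prob ys * (M\<^sup>2 * (\<Sum>j\<in>UNIV. \<Sum>u\<in>U. tr k s j u)
          + 2 * M * (\<Sum>j\<in>UNIV. \<Sum>u\<in>U. tr k s j u * d j u)
          + (\<Sum>j\<in>UNIV. \<Sum>u\<in>U. tr k s j u * (d j u)\<^sup>2))"
    by (simp add: power2_eq_square algebra_simps sum.distrib sum_distrib_left)
  also have "\<dots> \<le> path_prob ys * (M\<^sup>2 + (\<Sum>j\<in>UNIV. \<Sum>u\<in>U. tr k s j u * (4 * K\<^sup>2)))"
    unfolding centred tr_sum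
    by (auto intro!: mult_left_mono sum_mono path_prob_nonneg simp: tr_nonneg d_sq)
  also have "\<dots> = path_prob ys * (M\<^sup>2 + 4 * K\<^sup>2)"
    by (simp add: sum_distrib_right[symmetric] tr_sum)
  finally show ?thesis
    by (simp add: mart_extend[OF ys] path_prob_extend[OF ys] M_def d_def k_def s_def)
qed

lemma sum_paths_mart_square_le:
  assumes K: "\<And>j s. \<bar>\<phi> j s\<bar> \<le> K"
  shows "(\<Sum>xs\<in>paths n. (mart \<phi> (states xs) (positions xs) n)\<^sup>2 * path_prob xs) \<le> 4 * K\<^sup>2 * n"
proof (induction n)
  case (Suc n)
  have "(\<Sum>xs\<in>paths (Suc n). (mart \<phi> (states xs) (positions xs) (Suc n))\<^sup>2 * path_prob xs)
      \<le> (\<Sum>ys\<in>paths n. path_prob ys * ((mart \<phi> (states ys) (positions ys) n)\<^sup>2 + 4 * K\<^sup>2))"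
    unfolding sum_paths_Suc by (rule sum_mono) (rule sum_extend_mart_square_le[OF K])
  also have "\<dots> = (\<Sum>ys\<in>paths n. (mart \<phi> (states ys) (positions ys) n)\<^sup>2 * path_prob ys) + 4 * K\<^sup>2"
    by (simp add: distrib_left sum.distrib mult.commute sum_distrib_right[symmetric] sum_path_prob)
  also have "\<dots> \<le> 4 * K\<^sup>2 * Suc n" using Suc by (simp add: algebra_simps)
  finally show ?case .
qed (simp add: mart_def)

lemma prob_abs_mart_gt_le:
  assumes K: "\<And>j s. \<bar>\<phi> j s\<bar> \<le> K" and a: "a > 0"
  shows "measure N {\<omega> \<in> space N. a < \<bar>mart \<phi> (\<lambda>i. X i \<omega>) (\<lambda>i. Z i \<omega>) n\<bar>} \<le> 4 * K\<^sup>2 * n / a\<^sup>2"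
proof -
  let ?M = "\<lambda>xs. mart \<phi> (states xs) (positions xs) n"
  have "measure N {\<omega> \<in> space N. a < \<bar>mart \<phi> (\<lambda>i. X i \<omega>) (\<lambda>i. Z i \<omega>) n\<bar>}
      \<le> (\<Sum>xs\<in>{xs \<in> paths n. a < \<bar>?M xs\<bar>}. path_prob xs)"
    unfolding mart_traj by (rule prob_traj_le)
  also have "\<dots> \<le> (\<Sum>xs\<in>{xs \<in> paths n. a < \<bar>?M xs\<bar>}. (?M xs)\<^sup>2 / a\<^sup>2 * path_prob xs)"
  proof (rule sum_mono)
    fix xs assume "xs \<in> {xs \<in> paths n. a < \<bar>?M xs\<bar>}"
    then have "a\<^sup>2 \<le> (?M xs)\<^sup>2" using a abs_le_square_iff[of a "?M xs"] by simp
    then have "1 \<le> (?M xs)\<^sup>2 / a\<^sup>2" using a by simp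
    then show "path_prob xs \<le> (?M xs)\<^sup>2 / a\<^sup>2 * path_prob xs"
      using mult_right_mono[OF _ path_prob_nonneg[of xs]] by fastforce
  qed
  also have "\<dots> \<le> (\<Sum>xs\<in>paths n. (?M xs)\<^sup>2 / a\<^sup>2 * path_prob xs)"
    by (rule sum_mono2) (auto simp: finite_paths path_prob_nonneg)
  also have "\<dots> = (\<Sum>xs\<in>paths n. (?M xs)\<^sup>2 * path_prob xs) / a\<^sup>2"
    by (simp add: sum_divide_distrib)
  also have "\<dots> \<le> 4 * K\<^sup>2 * n / a\<^sup>2"
    by (rule divide_right_mono[OF sum_paths_mart_square_le[OF K]]) simp
  finally show ?thesis .
qed

text \<open>Telescoping \<open>\<phi>\<close> along the walk: \<open>\<phi> - \<psi> = (\<phi> - trans_op \<phi>) + (trans_op \<phi> - \<psi>)\<close>, and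
  the first part sums to the martingale plus a boundary term.\<close>
lemma abs_partial_sum_le:
  assumes K: "\<And>j s. \<bar>\<phi> j s\<bar> \<le> K" and \<delta>: "\<And>k s. \<bar>trans_op \<phi> k s - \<psi> k s\<bar> \<le> \<delta>"
  shows "\<bar>\<Sum>k<n. \<phi> (a k) (b k) - \<psi> (a k) (b k)\<bar> \<le> \<bar>mart \<phi> a b n\<bar> + 2 * K + n * \<delta>"
proof -
  have "(\<Sum>k<n. \<phi> (a k) (b k) - \<psi> (a k) (b k)) =
     (\<Sum>k<n. \<phi> (a k) (b k) - \<phi> (a (Suc k)) (b (Suc k))) + mart \<phi> a b n +
     (\<Sum>k<n. trans_op \<phi> (a k) (b k) - \<psi> (a k) (b k))"
    unfolding mart_def mart_incr_def sum.distrib[symmetric] by (intro sum.cong) auto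
  also have "(\<Sum>k<n. \<phi> (a k) (b k) - \<phi> (a (Suc k)) (b (Suc k))) = \<phi> (a 0) (b 0) - \<phi> (a n) (b n)"
    by (rule sum_lessThan_telescope')
  finally have split: "(\<Sum>k<n. \<phi> (a k) (b k) - \<psi> (a k) (b k)) =
     \<phi> (a 0) (b 0) - \<phi> (a n) (b n) + mart \<phi> a b n + (\<Sum>k<n. trans_op \<phi> (a k) (b k) - \<psi> (a k) (b k))" .
  have "\<bar>\<Sum>k<n. trans_op \<phi> (a k) (b k) - \<psi> (a k) (b k)\<bar> \<le> (\<Sum>k<n. \<delta>)"
    by (rule order.trans[OF sum_abs sum_mono]) (rule \<delta>)
  then show ?thesis unfolding split using K[of "a 0" "b 0"] K[of "a n" "b n"] by simp
qed

text \<open>Between the grid times \<open>j r\<close> the martingale moves by at most \<open>2 K r\<close>.\<close>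
lemma large_partial_sum_imp_large_mart:
  assumes K: "\<And>j s. \<bar>\<phi> j s\<bar> \<le> K" and \<delta>: "\<And>k s. \<bar>trans_op \<phi> k s - \<psi> k s\<bar> \<le> \<delta>"
    and r: "r \<ge> 1" and n: "n \<le> N\<^sub>0"
    and large: "c + 2 * K * (real r + 1) + real N\<^sub>0 * \<delta> < \<bar>\<Sum>k<n. \<phi> (a k) (b k) - \<psi> (a k) (b k)\<bar>"
  shows "\<exists>j\<le>N\<^sub>0 div r. c < \<bar>mart \<phi> a b (j * r)\<bar>"
proof (intro exI conjI)
  have K0: "K \<ge> 0" and \<delta>0: "\<delta> \<ge> 0" using K \<delta> by (meson abs_ge_zero order.trans)+
  have "\<bar>mart \<phi> a b (n div r * r + n mod r) - mart \<phi> a b (n div r * r)\<bar> \<le> real (n mod r) * (2 * K)"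
    by (rule abs_mart_diff_le[OF K])
  also have "\<dots> \<le> real r * (2 * K)"
    using K0 r by (intro mult_right_mono) (auto simp: less_imp_le)
  finally have "\<bar>mart \<phi> a b n - mart \<phi> a b (n div r * r)\<bar> \<le> real r * (2 * K)" by simp
  moreover have "real n * \<delta> \<le> real N\<^sub>0 * \<delta>" using n \<delta>0 by (simp add: mult_right_mono)
  ultimately show "c < \<bar>mart \<phi> a b (n div r * r)\<bar>"
    using large abs_partial_sum_le[OF K \<delta>, where n=n and a=a and b=b] by (simp add: algebra_simps)
  show "n div r \<le> N\<^sub>0 div r" using n by (rule div_le_mono)
qed

lemma prob_max_partial_sum_le:
  assumes K: "\<And>j s. \<bar>\<phi> j s\<bar> \<le> K" and \<delta>: "\<And>k s. \<bar>trans_op \<phi> k s - \<psi> k s\<bar> \<le> \<delta>"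
    and r: "r \<ge> 1" and c: "c > 0"
  shows "measure N {\<omega> \<in> space N. \<exists>n\<le>N\<^sub>0. c + 2 * K * (real r + 1) + real N\<^sub>0 * \<delta>
           < \<bar>\<Sum>k<n. \<phi> (X k \<omega>) (Z k \<omega>) - \<psi> (X k \<omega>) (Z k \<omega>)\<bar>}
         \<le> real (N\<^sub>0 div r + 1) * (4 * K\<^sup>2 * real N\<^sub>0 / c\<^sup>2)"
proof -
  let ?A = "\<lambda>j. {\<omega> \<in> space N. c < \<bar>mart \<phi> (\<lambda>i. X i \<omega>) (\<lambda>i. Z i \<omega>) (j * r)\<bar>}"
  have "{\<omega> \<in> space N. \<exists>n\<le>N\<^sub>0. c + 2 * K * (real r + 1) + real N\<^sub>0 * \<delta>
           < \<bar>\<Sum>k<n. \<phi> (X k \<omega>) (Z k \<omega>) - \<psi> (X k \<omega>) (Z k \<omega>)\<bar>} \<subseteq> (\<Union>j\<le>N\<^sub>0 div r. ?A j)"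
    using large_partial_sum_imp_large_mart[OF K \<delta> r, where a="\<lambda>i. X i _" and b="\<lambda>i. Z i _"]
    by fastforce
  then have "measure N {\<omega> \<in> space N. \<exists>n\<le>N\<^sub>0. c + 2 * K * (real r + 1) + real N\<^sub>0 * \<delta>
           < \<bar>\<Sum>k<n. \<phi> (X k \<omega>) (Z k \<omega>) - \<psi> (X k \<omega>) (Z k \<omega>)\<bar>}
      \<le> (\<Sum>j\<le>N\<^sub>0 div r. measure N (?A j))"
    by (intro order.trans[OF finite_measure_mono measure_UNION_le])
      (auto simp: mart_def mart_incr_def trans_op_def)
  also have "\<dots> \<le> (\<Sum>j\<le>N\<^sub>0 div r. 4 * K\<^sup>2 * real N\<^sub>0 / c\<^sup>2)"
  proof (rule sum_mono)
    fix j assume "j \<in> {..N\<^sub>0 div r}"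
    then have "j * r \<le> N\<^sub>0"
      using div_times_less_eq_dividend[of N\<^sub>0 r] by (meson atMost_iff le_trans mult_le_mono1)
    then have "real (j * r) \<le> real N\<^sub>0" by (simp only: of_nat_le_iff)
    then have "4 * K\<^sup>2 * real (j * r) / c\<^sup>2 \<le> 4 * K\<^sup>2 * real N\<^sub>0 / c\<^sup>2"
      by (intro divide_right_mono mult_left_mono) auto
    then show "measure N (?A j) \<le> 4 * K\<^sup>2 * real N\<^sub>0 / c\<^sup>2"
      using prob_abs_mart_gt_le[of \<phi> K c "j * r", OF K c] by linarith
  qed
  finally show ?thesis by simp
qed

lemma prob_sup_scaled_partial_sum_le:
  fixes m :: nat
  assumes K: "\<And>j s. \<bar>\<phi> j s\<bar> \<le> K" and \<delta>: "\<And>k s. \<bar>trans_op \<phi> k s - \<psi> k s\<bar> \<le> \<delta>"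
    and m: "m \<ge> 1" and T: "T \<ge> 0" and \<epsilon>: "\<epsilon> > 0"
    and gap: "2 * K * (real m + 1) + real m ^ 2 * T * \<delta> \<le> \<epsilon> * real m ^ 2 / 2"
  shows "measure N {\<omega> \<in> space N. \<epsilon> < (SUP t\<in>{0..T}.
            \<bar>\<Sum>k<nat \<lfloor>real m ^ 2 * t\<rfloor>. \<phi> (X k \<omega>) (Z k \<omega>) - \<psi> (X k \<omega>) (Z k \<omega>)\<bar> / real m ^ 2)}
         \<le> 16 * K\<^sup>2 * T * (T + 1) / \<epsilon>\<^sup>2 / real m"
proof -
  let ?S = "\<lambda>n \<omega>. \<bar>\<Sum>k<n. \<phi> (X k \<omega>) (Z k \<omega>) - \<psi> (X k \<omega>) (Z k \<omega>)\<bar>"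
  define N\<^sub>0 where "N\<^sub>0 = nat \<lfloor>real m ^ 2 * T\<rfloor>"
  define a where "a = \<epsilon> * real m ^ 2 / 2"
  have m_pos: "real m > 0" and a_pos: "a > 0" using m \<epsilon> by (simp_all add: a_def)
  have \<delta>0: "\<delta> \<ge> 0" using \<delta> by (meson abs_ge_zero order.trans)
  have N\<^sub>0_le: "real N\<^sub>0 \<le> real m ^ 2 * T" using T by (simp add: N\<^sub>0_def)
  have "{\<omega> \<in> space N. \<epsilon> < (SUP t\<in>{0..T}. ?S (nat \<lfloor>real m ^ 2 * t\<rfloor>) \<omega> / real m ^ 2)}
      \<subseteq> {\<omega> \<in> space N. \<exists>n\<le>N\<^sub>0. a + 2 * K * (real m + 1) + real N\<^sub>0 * \<delta> < ?S n \<omega>}"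
  proof safe
    fix \<omega> assume \<omega>: "\<omega> \<in> space N"
      and "\<epsilon> < (SUP t\<in>{0..T}. ?S (nat \<lfloor>real m ^ 2 * t\<rfloor>) \<omega> / real m ^ 2)"
    then obtain n where n: "n \<le> N\<^sub>0" and "\<epsilon> < ?S n \<omega> / real m ^ 2"
      using less_SUP_floor_imp[of "real m ^ 2" T \<epsilon> "\<lambda>n. ?S n \<omega> / real m ^ 2"] T
      unfolding N\<^sub>0_def by auto
    then have "\<epsilon> * real m ^ 2 < ?S n \<omega>" using m_pos by (simp add: field_simps)
    moreover have "real N\<^sub>0 * \<delta> \<le> real m ^ 2 * T * \<delta>" using N\<^sub>0_le \<delta>0 by (rule mult_right_mono)
    ultimately show "\<exists>n\<le>N\<^sub>0. a + 2 * K * (real m + 1) + real N\<^sub>0 * \<delta> < ?S n \<omega>"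
      using n gap by (intro exI[of _ n]) (simp add: a_def)
  qed
  then have "measure N {\<omega> \<in> space N. \<epsilon> < (SUP t\<in>{0..T}. ?S (nat \<lfloor>real m ^ 2 * t\<rfloor>) \<omega> / real m ^ 2)}
      \<le> measure N {\<omega> \<in> space N. \<exists>n\<le>N\<^sub>0. a + 2 * K * (real m + 1) + real N\<^sub>0 * \<delta> < ?S n \<omega>}"
    by (rule finite_measure_mono) measurable
  also have "\<dots> \<le> real (N\<^sub>0 div m + 1) * (4 * K\<^sup>2 * real N\<^sub>0 / a\<^sup>2)"
    by (rule prob_max_partial_sum_le[OF K \<delta> m a_pos])
  also have "\<dots> \<le> ((T + 1) * real m) * (4 * K\<^sup>2 * (real m ^ 2 * T) / a\<^sup>2)"
  proof (intro mult_mono divide_right_mono mult_left_mono N\<^sub>0_le)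
    have "real (N\<^sub>0 div m) * real m \<le> real m ^ 2 * T"
      using N\<^sub>0_le div_times_less_eq_dividend[of N\<^sub>0 m] by (metis of_nat_le_iff of_nat_mult order.trans)
    then have "real (N\<^sub>0 div m) \<le> real m * T"
      using m_pos by (simp add: power2_eq_square mult.commute mult_le_cancel_left_pos)
    then show "real (N\<^sub>0 div m + 1) \<le> (T + 1) * real m" using m by (simp add: algebra_simps)
  qed (use T in auto)
  also have "\<dots> = 16 * K\<^sup>2 * T * (T + 1) / \<epsilon>\<^sup>2 / real m"
    using m_pos \<epsilon> by (simp add: a_def power2_eq_square field_simps)
  finally show ?thesis .
qed

end

section \<open>The rescaled chain\<close>

lemma finite_unit_steps: "finite (unit_steps :: (int^'d::finite) set)"
  unfolding unit_steps_def by (simp add: full_SetCompr_eq)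

lemma norm_rescale_step_le:
  fixes u :: "int^'d::finite"
  assumes u: "u \<in> unit_steps" and m: "m \<ge> 1"
  shows "norm (rescale m (s + u) - rescale m s) \<le> 1 / real m"
proof -
  obtain i0 c where u_axis: "u = axis i0 c" and c: "\<bar>c\<bar> = 1"
    using u by (auto simp: unit_steps_def)
  have "rescale m (s + u) - rescale m s = (\<chi> i. real_of_int (u $ i) / real m)"
    by (simp add: rescale_def vec_eq_iff diff_divide_distrib[symmetric])
  then have "norm (rescale m (s + u) - rescale m s)
      \<le> (\<Sum>i\<in>UNIV. \<bar>(\<chi> i. real_of_int (u $ i) / real m) $ i\<bar>)"
    using norm_le_l1_cart by metis
  also have "\<dots> = (\<Sum>i\<in>UNIV. if i = i0 then 1 / real m else 0)"
    using c m by (intro sum.cong refl) (auto simp: u_axis axis_def)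
  finally show ?thesis by simp
qed

lemma abs_rescaled_step_mean_diff_le:
  fixes P :: "'e::finite \<Rightarrow> 'e \<Rightarrow> real" and p :: "'e \<Rightarrow> real^'d::finite \<Rightarrow> int^'d \<Rightarrow> real"
    and \<phi> :: "'e \<Rightarrow> real^'d \<Rightarrow> real"
  assumes st: "stochastic P" and p_nonneg: "\<And>k y u. p k y u \<ge> 0"
    and p_sum: "\<And>k y. (\<Sum>u\<in>unit_steps. p k y u) = 1"
    and \<phi>_lipschitz: "\<And>j y z. \<bar>\<phi> j y - \<phi> j z\<bar> \<le> Lq * norm (y - z)" and Lq: "Lq \<ge> 0"
    and m: "m \<ge> 1"
  shows "\<bar>(\<Sum>j\<in>UNIV. \<Sum>u\<in>unit_steps. P k j * p k (rescale m s) u * \<phi> j (rescale m (s + u)))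
          - (\<Sum>j\<in>UNIV. P k j * \<phi> j (rescale m s))\<bar> \<le> Lq / real m"
proof -
  have P_nonneg: "\<And>i j. P i j \<ge> 0" and P_sum: "\<And>i. (\<Sum>j\<in>UNIV. P i j) = 1"
    using st by (auto simp: stochastic_def)
  let ?w = "\<lambda>j u. P k j * p k (rescale m s) u"
  have "(\<Sum>j\<in>UNIV. \<Sum>u\<in>unit_steps. ?w j u * \<phi> j (rescale m (s + u)))
          - (\<Sum>j\<in>UNIV. P k j * \<phi> j (rescale m s))
      = (\<Sum>j\<in>UNIV. \<Sum>u\<in>unit_steps. ?w j u * (\<phi> j (rescale m (s + u)) - \<phi> j (rescale m s)))"
    by (simp add: right_diff_distrib sum_subtractf sum_distrib_left[symmetric]
        sum_distrib_right[symmetric] p_sum mult.assoc)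
  also have "\<bar>\<dots>\<bar> \<le> (\<Sum>j\<in>UNIV. \<Sum>u\<in>unit_steps. ?w j u * (Lq / real m))"
  proof (rule order.trans[OF sum_abs sum_mono], rule order.trans[OF sum_abs sum_mono])
    fix j u assume u: "u \<in> (unit_steps :: (int^'d) set)"
    have "\<bar>\<phi> j (rescale m (s + u)) - \<phi> j (rescale m s)\<bar> \<le> Lq * (1 / real m)"
      by (rule order.trans[OF \<phi>_lipschitz mult_left_mono[OF norm_rescale_step_le[OF u m] Lq]])
    then have step: "\<bar>\<phi> j (rescale m (s + u)) - \<phi> j (rescale m s)\<bar> \<le> Lq / real m" by simp
    show "\<bar>?w j u * (\<phi> j (rescale m (s + u)) - \<phi> j (rescale m s))\<bar> \<le> ?w j u * (Lq / real m)"
      using mult_left_mono[OF step, of "?w j u"] P_nonneg p_nonneg by (simp add: abs_mult)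
  qed
  also have "\<dots> = (\<Sum>j\<in>UNIV. P k j * (\<Sum>u\<in>unit_steps. p k (rescale m s) u)) * (Lq / real m)"
    by (simp only: sum_distrib_left sum_distrib_right mult.assoc)
  also have "\<dots> = Lq / real m" by (simp add: p_sum P_sum)
  finally show ?thesis .
qed

lemma markov_walk_rescaled:
  fixes P :: "'e::finite \<Rightarrow> 'e \<Rightarrow> real" and p :: "'e \<Rightarrow> real^'d::finite \<Rightarrow> int^'d \<Rightarrow> real"
  assumes "prob_space N"
    and "\<And>n. X n \<in> measurable N (count_space UNIV)" and "\<And>n. Z n \<in> measurable N (count_space UNIV)"
    and "\<And>n (ks :: nat \<Rightarrow> 'e) (ss :: nat \<Rightarrow> int^'d). ss 0 = 0 \<Longrightarrow>
         measure N {\<omega> \<in> space N. \<forall>i\<le>n. X i \<omega> = ks i \<and> Z i \<omega> = ss i}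
       = measure N {\<omega> \<in> space N. X 0 \<omega> = ks 0} *
         (\<Prod>i<n. P (ks i) (ks (Suc i)) * p (ks i) (rescale m (ss i)) (ss (Suc i) - ss i))"
    and st: "stochastic P" and p_nonneg: "\<And>k y u. p k y u \<ge> 0"
    and p_sum: "\<And>k y. (\<Sum>u\<in>unit_steps. p k y u) = 1"
  shows "markov_walk N X Z (\<lambda>k s j u. P k j * p k (rescale m s) u) unit_steps"
proof (intro markov_walk.intro markov_walk_axioms.intro)
  show "(\<Sum>j\<in>UNIV. \<Sum>u\<in>unit_steps. P k j * p k (rescale m s) u) = 1" for k s
    using st p_sum by (simp add: stochastic_def sum_distrib_left[symmetric])
qed (use assms finite_unit_steps in \<open>auto simp: stochastic_def\<close>)

lemma prob_sup_rescaled_partial_sum_le: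
  fixes P :: "'e::finite \<Rightarrow> 'e \<Rightarrow> real" and p :: "'e \<Rightarrow> real^'d::finite \<Rightarrow> int^'d \<Rightarrow> real"
    and \<phi> :: "'e \<Rightarrow> real^'d \<Rightarrow> real" and m :: nat
  assumes walk: "markov_walk N X Z (\<lambda>k s j u. P k j * p k (rescale m s) u) unit_steps"
    and st: "stochastic P" and p_nonneg: "\<And>k y u. p k y u \<ge> 0"
    and p_sum: "\<And>k y. (\<Sum>u\<in>unit_steps. p k y u) = 1"
    and \<phi>_bounded: "\<And>j y. \<bar>\<phi> j y\<bar> \<le> K"
    and \<phi>_lipschitz: "\<And>j y z. \<bar>\<phi> j y - \<phi> j z\<bar> \<le> Lq * norm (y - z)" and Lq: "Lq \<ge> 0"
    and m: "m \<ge> 1" and T: "T \<ge> 0" and \<epsilon>: "\<epsilon> > 0"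
    and large: "2 * (4 * K + T * Lq) \<le> \<epsilon> * real m"
  shows "measure N {\<omega> \<in> space N. \<epsilon> < (SUP t\<in>{0..T}.
            \<bar>\<Sum>k<nat \<lfloor>real m ^ 2 * t\<rfloor>. \<phi> (X k \<omega>) (rescale m (Z k \<omega>))
               - (\<Sum>j\<in>UNIV. P (X k \<omega>) j * \<phi> j (rescale m (Z k \<omega>)))\<bar> / real m ^ 2)}
         \<le> 16 * K\<^sup>2 * T * (T + 1) / \<epsilon>\<^sup>2 / real m"
proof -
  interpret markov_walk N X Z "\<lambda>k s j u. P k j * p k (rescale m s) u" unit_steps
    by (rule walk)
  have K: "K \<ge> 0" using \<phi>_bounded by (meson abs_ge_zero order.trans)
  have "real m * (4 * K + T * Lq) \<le> real m * (\<epsilon> * real m / 2)"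
    using large by (intro mult_left_mono) auto
  moreover have "2 * K \<le> 2 * K * real m" using K m mult_left_mono[of 1 "real m" "2 * K"] by simp
  ultimately have gap: "2 * K * (real m + 1) + real m ^ 2 * T * (Lq / real m) \<le> \<epsilon> * real m ^ 2 / 2"
    using m by (simp add: power2_eq_square algebra_simps)
  have \<delta>: "\<bar>trans_op (\<lambda>j s. \<phi> j (rescale m s)) k s - (\<Sum>j\<in>UNIV. P k j * \<phi> j (rescale m s))\<bar>
      \<le> Lq / real m" for k s
    using abs_rescaled_step_mean_diff_le[where P=P and p=p and \<phi>=\<phi> and Lq=Lq and m=m and k=k and s=s,
        OF st p_nonneg p_sum \<phi>_lipschitz Lq m]
    by (simp add: trans_op_def mult.assoc)
  show ?thesis
    by (rule prob_sup_scaled_partial_sum_le[where \<phi>="\<lambda>j s. \<phi> j (rescale m s)" and K=K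
          and \<psi>="\<lambda>k s. \<Sum>j\<in>UNIV. P k j * \<phi> j (rescale m s)" and \<delta>="Lq / real m",
          OF \<phi>_bounded \<delta> m T \<epsilon> gap])
qed

lemma abs_fbar_le:
  assumes "\<And>i. \<mu> i \<ge> 0" and "(\<Sum>i\<in>UNIV. \<mu> i) = 1" and "\<And>k y. \<bar>f k y\<bar> \<le> B"
  shows "\<bar>fbar f \<mu> y\<bar> \<le> B"
proof -
  have "\<bar>fbar f \<mu> y\<bar> \<le> (\<Sum>i\<in>UNIV. \<bar>f i y\<bar> * \<mu> i)"
    unfolding fbar_def by (rule order.trans[OF sum_abs]) (simp add: abs_mult assms(1))
  also have "\<dots> \<le> (\<Sum>i\<in>UNIV. B * \<mu> i)"
    by (intro sum_mono mult_right_mono) (simp_all add: assms)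
  finally show ?thesis by (simp add: sum_distrib_left[symmetric] assms(2))
qed

lemma abs_fbar_diff_le:
  assumes "\<And>i. \<mu> i \<ge> 0" and "(\<Sum>i\<in>UNIV. \<mu> i) = 1"
    and "\<And>k y z. \<bar>f k y - f k z\<bar> \<le> L * norm (y - z)"
  shows "\<bar>fbar f \<mu> y - fbar f \<mu> z\<bar> \<le> L * norm (y - z)"
proof -
  have "fbar f \<mu> y - fbar f \<mu> z = (\<Sum>i\<in>UNIV. (f i y - f i z) * \<mu> i)"
    by (simp add: fbar_def sum_subtractf left_diff_distrib)
  also have "\<bar>\<dots>\<bar> \<le> (\<Sum>i\<in>UNIV. \<bar>f i y - f i z\<bar> * \<mu> i)"
    by (rule order.trans[OF sum_abs]) (simp add: abs_mult assms(1))
  also have "\<dots> \<le> (\<Sum>i\<in>UNIV. L * norm (y - z) * \<mu> i)"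
    by (intro sum_mono mult_right_mono) (simp_all add: assms)
  finally show ?thesis by (simp add: sum_distrib_left[symmetric] assms(2))
qed

lemma poisson_equation_fbar:
  fixes P :: "'e::finite \<Rightarrow> 'e \<Rightarrow> real" and f :: "'e \<Rightarrow> real^'d::finite \<Rightarrow> real"
  assumes st: "stochastic P" and mu: "invariant_prob P \<mu>"
    and uniq: "\<And>\<nu>. invariant_prob P \<nu> \<Longrightarrow> \<nu> = \<mu>"
    and f_bounded: "\<exists>B. \<forall>k y. \<bar>f k y\<bar> \<le> B"
    and f_lipschitz: "\<exists>L. \<forall>k y z. \<bar>f k y - f k z\<bar> \<le> L * norm (y - z)"
  obtains \<phi> K Lq where "\<And>i y. \<phi> i y - (\<Sum>j\<in>UNIV. P i j * \<phi> j y) = f i y - fbar f \<mu> y"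
    and "\<And>i y. \<bar>\<phi> i y\<bar> \<le> K" and "\<And>i y z. \<bar>\<phi> i y - \<phi> i z\<bar> \<le> Lq * norm (y - z)"
    and "Lq \<ge> 0"
proof -
  obtain B where B: "\<And>k y. \<bar>f k y\<bar> \<le> B" using f_bounded by blast
  obtain L where L: "\<And>k y z. \<bar>f k y - f k z\<bar> \<le> L * norm (y - z)" using f_lipschitz by blast
  have L_abs: "\<bar>f k y - f k z\<bar> \<le> \<bar>L\<bar> * norm (y - z)" for k y z
    using L[of k y z] abs_ge_self[of L] by (meson mult_right_mono norm_ge_zero order.trans)
  have \<mu>: "\<And>i. \<mu> i \<ge> 0" "(\<Sum>i\<in>UNIV. \<mu> i) = 1"
    using mu by (auto simp: invariant_prob_def)
  have h_bounded: "\<bar>f i y - fbar f \<mu> y\<bar> \<le> 2 * B" for i y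
    using B[of i y] abs_fbar_le[of \<mu> f B y, OF \<mu> B] by linarith
  have h_lipschitz: "\<bar>(f i y - fbar f \<mu> y) - (f i z - fbar f \<mu> z)\<bar> \<le> 2 * \<bar>L\<bar> * norm (y - z)" for i y z
    using L_abs[of i y z] abs_fbar_diff_le[of \<mu> f "\<bar>L\<bar>" y z, OF \<mu> L_abs] by linarith
  have h_centered: "(\<Sum>i\<in>UNIV. \<mu> i * (f i y - fbar f \<mu> y)) = 0" for y
    by (simp add: right_diff_distrib sum_subtractf sum_distrib_right[symmetric] \<mu>(2))
      (simp add: fbar_def mult.commute)
  have "0 \<le> 2 * \<bar>L\<bar>" by simp
  from poisson_equation[OF st mu uniq h_bounded h_lipschitz this h_centered] that show thesis
    by blast
qed

theorem proposition4p5: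
  fixes P :: "'e::finite \<Rightarrow> 'e \<Rightarrow> real"
    and \<mu> :: "'e \<Rightarrow> real"
    and p :: "'e \<Rightarrow> real ^ 'd::finite \<Rightarrow> int ^ 'd \<Rightarrow> real"
    and f :: "'e \<Rightarrow> real ^ 'd \<Rightarrow> real"
    and M :: "nat \<Rightarrow> 'a measure"
    and \<xi> :: "nat \<Rightarrow> nat \<Rightarrow> 'a \<Rightarrow> 'e"
    and S :: "nat \<Rightarrow> nat \<Rightarrow> 'a \<Rightarrow> int ^ 'd"
    and T :: real
  assumes P_stoch: "stochastic P"
    and P_irr: "irreducible_mc P"
    and P_aper: "aperiodic_mc P"
    and mu_inv: "invariant_prob P \<mu>"
    and mu_unique: "\<And>\<nu>. invariant_prob P \<nu> \<Longrightarrow> \<nu> = \<mu>"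
    and p_nonneg: "\<And>k y u. p k y u \<ge> 0"
    and p_supp: "\<And>k y u. u \<notin> unit_steps \<Longrightarrow> p k y u = 0"
    and p_sum: "\<And>k y. (\<Sum>u\<in>unit_steps. p k y u) = 1"
    and p_C2: "\<And>k u. \<exists>D1 :: real ^ 'd \<Rightarrow> real ^ 'd. \<exists>D2 :: real ^ 'd \<Rightarrow> real ^ 'd ^ 'd.
         (\<forall>y. ((\<lambda>z. p k z u) has_derivative (\<lambda>h. D1 y \<bullet> h)) (at y)) \<and>
         (\<forall>y. (D1 has_derivative (\<lambda>h. D2 y *v h)) (at y)) \<and>
         continuous_on UNIV D2 \<and>
         bounded (range D1) \<and> bounded (range D2)"
    and g_centered: "\<And>y. (\<Sum>k\<in>UNIV. \<mu> k *\<^sub>R drift p k y) = 0"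
    and f_bounded: "\<exists>B. \<forall>k y. \<bar>f k y\<bar> \<le> B"
    and f_lipschitz: "\<exists>L. \<forall>k y z. \<bar>f k y - f k z\<bar> \<le> L * norm (y - z)"
    and M_prob: "\<And>m. m \<ge> 1 \<Longrightarrow> prob_space (M m)"
    and xi_meas: "\<And>m n. m \<ge> 1 \<Longrightarrow> \<xi> m n \<in> measurable (M m) (count_space UNIV)"
    and S_meas: "\<And>m n. m \<ge> 1 \<Longrightarrow> S m n \<in> measurable (M m) (count_space UNIV)"
    and S0: "\<And>m \<omega>. m \<ge> 1 \<Longrightarrow> \<omega> \<in> space (M m) \<Longrightarrow> S m 0 \<omega> = 0"
    and chain_law: "\<And>m n (ks :: nat \<Rightarrow> 'e) (ss :: nat \<Rightarrow> int ^ 'd). m \<ge> 1 \<Longrightarrow> ss 0 = 0 \<Longrightarrow>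
         measure (M m) {\<omega> \<in> space (M m). \<forall>i\<le>n. \<xi> m i \<omega> = ks i \<and> S m i \<omega> = ss i}
       = measure (M m) {\<omega> \<in> space (M m). \<xi> m 0 \<omega> = ks 0} *
         (\<Prod>i<n. P (ks i) (ks (Suc i)) * p (ks i) (rescale m (ss i)) (ss (Suc i) - ss i))"
    and T_nonneg: "T \<ge> 0"
  shows "\<forall>\<epsilon>>0. ((\<lambda>m. measure (M m) {\<omega> \<in> space (M m).
            (SUP t\<in>{0..T}. \<bar>(\<Sum>k<nat \<lfloor>real m ^ 2 * t\<rfloor>. f (\<xi> m k \<omega>) (rescale m (S m k \<omega>)))
                            - (\<Sum>k<nat \<lfloor>real m ^ 2 * t\<rfloor>. fbar f \<mu> (rescale m (S m k \<omega>)))\<bar>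
                          / real m ^ 2) > \<epsilon>}) \<longlonglongrightarrow> 0)"
proof (intro allI impI)
  \<comment> \<open>Uniqueness of \<open>\<mu>\<close> suffices to solve the Poisson equation, and the cylinder law alone
    confines the walk to unit-step paths from \<open>0\<close>.\<close>
  fix \<epsilon> :: real assume \<epsilon>: "\<epsilon> > 0"
  obtain \<phi> K Lq where \<phi>_eq: "\<And>i y. \<phi> i y - (\<Sum>j\<in>UNIV. P i j * \<phi> j y) = f i y - fbar f \<mu> y"
    and \<phi>_bounded: "\<And>i y. \<bar>\<phi> i y\<bar> \<le> K"
    and \<phi>_lipschitz: "\<And>i y z. \<bar>\<phi> i y - \<phi> i z\<bar> \<le> Lq * norm (y - z)" and Lq: "Lq \<ge> 0"
    using poisson_equation_fbar[OF P_stoch mu_inv mu_unique f_bounded f_lipschitz] by blast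
  define C where "C = 16 * K\<^sup>2 * T * (T + 1) / \<epsilon>\<^sup>2"
  define m\<^sub>0 where "m\<^sub>0 = nat \<lceil>2 * (4 * K + T * Lq) / \<epsilon>\<rceil> + 1"
  have bound: "measure (M m) {\<omega> \<in> space (M m).
            (SUP t\<in>{0..T}. \<bar>(\<Sum>k<nat \<lfloor>real m ^ 2 * t\<rfloor>. f (\<xi> m k \<omega>) (rescale m (S m k \<omega>)))
                            - (\<Sum>k<nat \<lfloor>real m ^ 2 * t\<rfloor>. fbar f \<mu> (rescale m (S m k \<omega>)))\<bar>
                          / real m ^ 2) > \<epsilon>} \<le> C / real m" if "m \<ge> m\<^sub>0" for m
  proof -
    have m: "m \<ge> 1" using that by (simp add: m\<^sub>0_def)
    have "2 * (4 * K + T * Lq) / \<epsilon> \<le> real m"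
      using that unfolding m\<^sub>0_def by linarith
    then have large: "2 * (4 * K + T * Lq) \<le> \<epsilon> * real m" using \<epsilon> by (simp add: field_simps)
    show ?thesis
      unfolding C_def sum_subtractf[symmetric] \<phi>_eq[symmetric]
      by (rule prob_sup_rescaled_partial_sum_le[OF markov_walk_rescaled[OF M_prob[OF m]
            xi_meas[OF m] S_meas[OF m] chain_law[OF m] P_stoch p_nonneg p_sum]
            P_stoch p_nonneg p_sum \<phi>_bounded \<phi>_lipschitz Lq m T_nonneg \<epsilon> large])
  qed
  have lim: "(\<lambda>m. C / real m) \<longlonglongrightarrow> 0"
    by (intro tendsto_divide_0[OF tendsto_const] filterlim_at_top_imp_at_infinity
        filterlim_real_sequentially)
  show "(\<lambda>m. measure (M m) {\<omega> \<in> space (M m).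
            (SUP t\<in>{0..T}. \<bar>(\<Sum>k<nat \<lfloor>real m ^ 2 * t\<rfloor>. f (\<xi> m k \<omega>) (rescale m (S m k \<omega>)))
                            - (\<Sum>k<nat \<lfloor>real m ^ 2 * t\<rfloor>. fbar f \<mu> (rescale m (S m k \<omega>)))\<bar>
                          / real m ^ 2) > \<epsilon>}) \<longlonglongrightarrow> 0"
    by (rule Lim_null_comparison[OF eventually_sequentiallyI[of m\<^sub>0] lim]) (simp add: bound)
qed

end
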